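(* Let $\Pi$ be a finite projective plane and let $\mathcal{S}$ be a semioval in $\Pi$. Suppose that $\mathcal{T}\subset\mathcal{S}$ is a pointset with the property that for every line $\ell$ which is a secant line to $\mathcal{S}$ (i.e. $|\mathcal{S}\cap\ell|\geq 2$) the inequality $|\mathcal{S}\cap\ell|\geq|\mathcal{T}\cap\ell|+2$ holds. Then $\mathcal{S}\setminus\mathcal{T}$ is a semioval, and $\mathcal{S}$ contains semiovals of size $k$ for every integer $k$ satisfying $|\mathcal{S}\setminus\mathcal{T}|\leq k\leq|\mathcal{S}|$.
   Context: A semioval in a projective plane is a non-empty pointset $\mathcal{S}$ such that for every point $P\in\mathcal{S}$ there is a unique line $t_P$ with $\mathcal{S}\cap t_P=\{P\}$ (the tangent line at $P$). *)

theory Defs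
  imports Main
begin

definition projective_plane :: "'p set \<Rightarrow> 'l set \<Rightarrow> ('p \<Rightarrow> 'l \<Rightarrow> bool) \<Rightarrow> bool" where
  "projective_plane Pts Lns inc \<longleftrightarrow>
     (\<forall>P\<in>Pts. \<forall>Q\<in>Pts. P \<noteq> Q \<longrightarrow> (\<exists>!l. l \<in> Lns \<and> inc P l \<and> inc Q l)) \<and>
     (\<forall>l\<in>Lns. \<forall>m\<in>Lns. l \<noteq> m \<longrightarrow> (\<exists>!P. P \<in> Pts \<and> inc P l \<and> inc P m)) \<and>
     (\<exists>A B C D. {A, B, C, D} \<subseteq> Pts \<and> card {A, B, C, D} = 4 \<and>
        (\<forall>l\<in>Lns. card {X \<in> {A, B, C, D}. inc X l} \<le> 2))"

definition finite_projective_plane :: "'p set \<Rightarrow> 'l set \<Rightarrow> ('p \<Rightarrow> 'l \<Rightarrow> bool) \<Rightarrow> bool" where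
  "finite_projective_plane Pts Lns inc \<longleftrightarrow>
     projective_plane Pts Lns inc \<and> finite Pts \<and> finite Lns"

definition on_line :: "('p \<Rightarrow> 'l \<Rightarrow> bool) \<Rightarrow> 'p set \<Rightarrow> 'l \<Rightarrow> 'p set" where
  "on_line inc S l = {P \<in> S. inc P l}"

definition semioval :: "'p set \<Rightarrow> 'l set \<Rightarrow> ('p \<Rightarrow> 'l \<Rightarrow> bool) \<Rightarrow> 'p set \<Rightarrow> bool" where
  "semioval Pts Lns inc S \<longleftrightarrow>
     S \<subseteq> Pts \<and> S \<noteq> {} \<and>
     (\<forall>P\<in>S. \<exists>!t. t \<in> Lns \<and> on_line inc S t = {P})"

end

theory Submission
  imports Defs
begin

text \<open>Every tangent of \<open>S - T\<close> is already a tangent of \<open>S\<close>: a line meeting \<open>S - T\<close> only in \<open>P\<close>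
  carries at most one point of \<open>S\<close> beyond those of \<open>T\<close>, so by the bound it cannot be a secant
  of \<open>S\<close>. Hence the tangents of \<open>S - T\<close> are those of \<open>S\<close> at the surviving points, and
  \<open>S - T\<close> is a semioval. The bound is inherited by every subset of \<open>T\<close>; removing subsets of
  \<open>T\<close> of every size between \<open>0\<close> and \<open>|T|\<close> gives semiovals of all intermediate sizes.\<close>

lemma semioval_subset:
  assumes "semioval Pts Lns inc S" and "S' \<subseteq> S" and "S' \<noteq> {}"
    and "\<And>l P. l \<in> Lns \<Longrightarrow> on_line inc S' l = {P} \<Longrightarrow> on_line inc S l = {P}"
  shows "semioval Pts Lns inc S'"
  unfolding semioval_def
proof (intro conjI ballI)
  show "S' \<subseteq> Pts" "S' \<noteq> {}" using assms(1-3) unfolding semioval_def by auto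
next
  fix P assume "P \<in> S'"
  then have "\<exists>!t. t \<in> Lns \<and> on_line inc S t = {P}"
    using assms(1,2) unfolding semioval_def by blast
  then obtain t where t: "t \<in> Lns" "on_line inc S t = {P}"
    and unique: "\<And>m. m \<in> Lns \<Longrightarrow> on_line inc S m = {P} \<Longrightarrow> m = t"
    by blast
  show "\<exists>!t. t \<in> Lns \<and> on_line inc S' t = {P}"
  proof (rule ex1I)
    show "t \<in> Lns \<and> on_line inc S' t = {P}"
      using t \<open>P \<in> S'\<close> assms(2) unfolding on_line_def by auto
  next
    fix m assume "m \<in> Lns \<and> on_line inc S' m = {P}"
    then show "m = t" using unique assms(4)[of m P] by blast
  qed
qed

lemma card_on_line_mono:
  assumes "finite T" and "T' \<subseteq> T"
  shows "card (on_line inc T' l) \<le> card (on_line inc T l)"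
  using assms by (intro card_mono) (auto simp: on_line_def)

lemma tangent_of_Diff_is_tangent:
  assumes "finite S" and "T \<subseteq> S" and "l \<in> Lns" and "on_line inc (S - T) l = {P}"
    and bound: "\<forall>l\<in>Lns. card (on_line inc S l) \<ge> 2 \<longrightarrow>
            card (on_line inc S l) \<ge> card (on_line inc T l) + 2"
  shows "on_line inc S l = {P}"
proof -
  have fin: "finite (on_line inc S l)" "finite (on_line inc T l)"
    using assms(1,2) by (auto simp: on_line_def intro: finite_subset)
  have split: "on_line inc S l \<subseteq> insert P (on_line inc T l)"
    using assms(4) unfolding on_line_def by blast
  have "P \<in> on_line inc S l"
    using assms(4) unfolding on_line_def by blast
  have "card (on_line inc S l) \<le> card (on_line inc T l) + 1"
    using card_mono[OF _ split] fin by (simp add: card_insert_if split: if_splits)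
  moreover have "card (on_line inc S l) \<ge> 2 \<longrightarrow>
      card (on_line inc S l) \<ge> card (on_line inc T l) + 2"
    using bound assms(3) by blast
  ultimately have "card (on_line inc S l) \<le> Suc 0"
    by linarith
  with fin(1) \<open>P \<in> on_line inc S l\<close> show ?thesis
    by (auto simp: card_le_Suc0_iff_eq)
qed

lemma semioval_Diff:
  assumes "semioval Pts Lns inc S" and "finite S" and "T \<subset> S"
    and "\<forall>l\<in>Lns. card (on_line inc S l) \<ge> 2 \<longrightarrow>
            card (on_line inc S l) \<ge> card (on_line inc T l) + 2"
  shows "semioval Pts Lns inc (S - T)"
proof (rule semioval_subset[OF assms(1)])
  show "S - T \<subseteq> S" "S - T \<noteq> {}" using assms(3) by blast+
next
  fix l P assume "l \<in> Lns" "on_line inc (S - T) l = {P}"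
  with assms(2,3,4) show "on_line inc S l = {P}"
    by (intro tangent_of_Diff_is_tangent[of S T l Lns]) auto
qed

theorem mainTheorem1:
  fixes Pts :: "'p set" and Lns :: "'l set" and inc :: "'p \<Rightarrow> 'l \<Rightarrow> bool"
    and S T :: "'p set"
  assumes "finite_projective_plane Pts Lns inc"
    and "semioval Pts Lns inc S"
    and "T \<subset> S"
    and "\<forall>l\<in>Lns. card (on_line inc S l) \<ge> 2 \<longrightarrow>
            card (on_line inc S l) \<ge> card (on_line inc T l) + 2"
  shows "semioval Pts Lns inc (S - T) \<and>
         (\<forall>k::nat. card (S - T) \<le> k \<and> k \<le> card S \<longrightarrow>
            (\<exists>S'. S' \<subseteq> S \<and> semioval Pts Lns inc S' \<and> card S' = k))"
proof -
  have "finite S"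
    using assms(1,2) finite_subset unfolding finite_projective_plane_def semioval_def by blast
  then have "finite T" using assms(3) finite_subset by blast
  have removable: "semioval Pts Lns inc (S - T')" if "T' \<subseteq> T" for T'
  proof (rule semioval_Diff[OF assms(2) \<open>finite S\<close>])
    show "T' \<subset> S" using that assms(3) by blast
    show "\<forall>l\<in>Lns. card (on_line inc S l) \<ge> 2 \<longrightarrow>
            card (on_line inc S l) \<ge> card (on_line inc T' l) + 2"
      using assms(4) card_on_line_mono[OF \<open>finite T\<close> that, of inc] by (meson add_le_mono1 order_trans)
  qed
  have "\<exists>S'. S' \<subseteq> S \<and> semioval Pts Lns inc S' \<and> card S' = k"
    if "card (S - T) \<le> k" "k \<le> card S" for k
  proof -
    have "card S - k \<le> card T"
      using that assms(3) \<open>finite T\<close> by (simp add: card_Diff_subset)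
    then obtain T' where "T' \<subseteq> T" "card T' = card S - k"
      using obtain_subset_with_card_n by metis
    moreover from this have "card (S - T') = k"
      using that assms(3) \<open>finite T\<close> by (simp add: card_Diff_subset finite_subset)
    ultimately show ?thesis using removable by blast
  qed
  then show ?thesis using removable by blast
qed

end
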